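(* (i) For any $\alpha\in(0,\infty)$ and $\lambda>0$ there exist $C_1=C_1(d,\alpha,\lambda)$, $C_2=C_2(d,\alpha)$ such that for all $t>0$, $x\in\mathbb R^d$: $\xi_{\lambda,0}(t,x)\le C_1\eta_{\alpha,\alpha}(t,x)$, and for all $\gamma\ge0$, $t>0$: $\int_{\mathbb R^d}\eta_{\alpha,\gamma}(t,x)dx\le C_2t^{(\gamma-\alpha)/2}$; and there is $C_3=C_3(d,\alpha)>0$ such that for all $t,s>0$, $x\in\mathbb R^d$, $\gamma\in[0,\alpha]$: $\int_{\mathbb R^d}\eta_{\alpha,\gamma}(t,x-z)\eta_{\alpha,\alpha}(s,z)dz\ge C_3\eta_{\alpha,\gamma}(t+s,x)$. (ii) For $0<\alpha\le\beta$ and all $t,s>0$, $x,y$: $\eta_{\alpha,0}(t,x)\eta_{\beta,0}(s,y)\le2^{d+\alpha}(\eta_{\beta,0}(t,x)+\eta_{\beta,0}(s,y))\eta_{\alpha,0}(t+s,x+y)$. Moreover there is $C_4=C_4(d,\alpha,\beta)$ such that for all $\gamma_1,\gamma_2>\beta-2$, all $t<s$ and $x,y$, $$\int_t^s\!\!\int_{\mathbb R^d}\eta_{\alpha,\gamma_1}(s-r,y-z)\eta_{\beta,\gamma_2}(r-t,z-x)dz\,dr\le C_4\mathcal B\big(\tfrac{\gamma_1-\beta}2+1,\tfrac{\gamma_2-\beta}2+1\big)\eta_{\alpha,2+\gamma_1+\gamma_2-\beta}(s-t,y-x).$$ (iii) For $\alpha\in(0,2)$ there is $C_5=C_5(d,\alpha,\lambda)$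 such that for all $\gamma_1>-2$, $\gamma_2>\alpha-2$, $$\int_t^s\!\!\int\xi_{\lambda,\gamma_1}(r-t,z-x)\eta_{\alpha,\gamma_2}(s-r,y-z)dz\,dr\le C_5\mathcal B\big(\tfrac{\gamma_1}2+1,\tfrac{\gamma_2-\alpha}2+1\big)\eta_{\alpha,2+\gamma_1+\gamma_2}(s-t,y-x).$$ (iv) For $\lambda>0$: $\int\xi_{\lambda,0}(t,x-y)\xi_{\lambda,0}(s,y)dy=(\pi\lambda^{-1})^{d/2}\xi_{\lambda,0}(t+s,x)$, and for $\gamma_1,\gamma_2>-2$, $$\int_t^s\!\!\int\xi_{\lambda,\gamma_1}(r-t,z-x)\xi_{\lambda,\gamma_2}(s-r,y-z)dz\,dr=(\pi\lambda^{-1})^{d/2}\mathcal B\big(\tfrac{\gamma_1}2+1,\tfrac{\gamma_2}2+1\big)\xi_{\lambda,2+\gamma_1+\gamma_2}(s-t,y-x).$$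
   Context: $d\ge2$. For $\gamma,\lambda\in\mathbb R$, $t>0$, $x\in\mathbb R^d$: $\xi_{\lambda,\gamma}(t,x):=t^{(\gamma-d)/2}e^{-\lambda|x|^2/t}$, $\eta_{\alpha,\gamma}(t,x):=t^{\gamma/2}(|x|+t^{1/2})^{-d-\alpha}$. $\mathcal B(a,b):=\int_0^1(1-s)^{a-1}s^{b-1}ds$ is the Beta function. In (ii)–(iv) $0\le t<s$ and $x,y\in\mathbb R^d$ are arbitrary. *)

theory Defs
  imports "HOL-Analysis.Analysis"
begin

text \<open>The dimension d is DIM('a) of the euclidean space type 'a.\<close>

definition xi :: "real \<Rightarrow> real \<Rightarrow> real \<Rightarrow> 'a::euclidean_space \<Rightarrow> real" where
  "xi lam gam t x = t powr ((gam - real DIM('a)) / 2) * exp (- lam * (norm x)\<^sup>2 / t)"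

definition eta :: "real \<Rightarrow> real \<Rightarrow> real \<Rightarrow> 'a::euclidean_space \<Rightarrow> real" where
  "eta alpha gam t x = t powr (gam / 2) * (norm x + sqrt t) powr (- (real DIM('a) + alpha))"

end

theory Submission
  imports Defs "HOL-Probability.Probability"
begin

text \<open>
  The Gaussian kernels reproduce exactly: completing the square in \<open>z\<close> turns a product of two
  Gaussians into a Gaussian centred on the segment from \<open>x\<close> to \<open>y\<close>, and once the time weights
  \<open>(r - t) powr (\<gamma>\<^sub>1/2) * (s - r) powr (\<gamma>\<^sub>2/2)\<close> are split off, the time integral is a Beta integral.

  The kernel \<open>\<eta>\<close> is only dominated.  Since \<open>|x + y| + \<surd>(t + s) \<le> (|x| + \<surd>t) + (|y| + \<surd>s)\<close>, the
  larger of the two factors is at least half of the combined one, so a product of two \<open>\<eta>\<close>'s is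
  bounded by \<open>\<eta>\<close> at the combined point times a single \<open>\<eta>\<close> that is integrable in \<open>z\<close>; its integral
  is a geometric series over the dyadic shells \<open>|z| \<sim> 2\<^sup>k \<surd>t\<close>, convergent because \<open>\<alpha> > 0\<close>.
  Gaussian decay beats polynomial decay, so \<open>\<xi> \<le> C \<eta>\<close>, which reduces (iii) to (ii) with \<open>\<beta> = \<alpha>\<close>.
  The lower bound in (i) integrates over a ball of radius \<open>\<surd>(min t s)\<close>, on which both factors
  are comparable to their maxima.
\<close>

lemma xi_measurable [measurable]: "xi lam g t \<in> borel_measurable (borel :: 'a::euclidean_space measure)"
  unfolding xi_def by measurable

lemma eta_measurable [measurable]: "eta al g t \<in> borel_measurable (borel :: 'a::euclidean_space measure)"
  unfolding eta_def by measurable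

lemma xi_nonneg [simp]: "xi lam g t x \<ge> 0"
  by (simp add: xi_def)

lemma eta_nonneg [simp]: "eta al g t x \<ge> 0"
  by (simp add: eta_def)

lemma xi_time_weight: "t > 0 \<Longrightarrow> xi lam g t x = t powr (g / 2) * xi lam 0 t (x::'a::euclidean_space)"
  by (simp add: xi_def powr_add[symmetric] diff_divide_distrib)

lemma eta_time_weight: "t > 0 \<Longrightarrow> eta al g t x = t powr (g / 2) * eta al 0 t (x::'a::euclidean_space)"
  by (simp add: eta_def)

lemma eta_zero_eq: "t > 0 \<Longrightarrow> eta al 0 t x = (norm (x::'a::euclidean_space) + sqrt t) powr - (real DIM('a) + al)"
  by (simp add: eta_def)

lemma eta_minus_commute: "eta al g t (x - y) = eta al g t (y - x)"
  by (simp add: eta_def norm_minus_commute)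

section \<open>Gaussian integrals\<close>

lemma nn_integral_gaussian_real:
  fixes mu a :: real
  assumes mu: "mu > 0"
  shows "(\<integral>\<^sup>+x. ennreal (exp (- mu * (x - a)\<^sup>2)) \<partial>lborel) = ennreal (sqrt (pi / mu))"
proof -
  define sg where "sg = sqrt (1 / (2 * mu))"
  have sg2: "sg\<^sup>2 = 1 / (2 * mu)"
    using mu by (simp add: sg_def)
  have density: "exp (- mu * (x - a)\<^sup>2) = sqrt (pi / mu) * normal_density a sg x" for x
  proof -
    have "2 * pi * sg\<^sup>2 = pi / mu"
      using mu sg2 by (simp add: field_simps)
    moreover have "- (x - a)\<^sup>2 / (2 * sg\<^sup>2) = - mu * (x - a)\<^sup>2"
      using mu by (simp add: sg2)
    ultimately show ?thesis
      using mu by (simp add: normal_density_def)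
  qed
  have "(\<integral>\<^sup>+x. ennreal (exp (- mu * (x - a)\<^sup>2)) \<partial>lborel)
      = (\<integral>\<^sup>+x. ennreal (sqrt (pi / mu)) * ennreal (normal_density a sg x) \<partial>lborel)"
    by (intro nn_integral_cong) (subst density, rule ennreal_mult, use mu in auto)
  also have "\<dots> = ennreal (sqrt (pi / mu)) * (\<integral>\<^sup>+x. ennreal (normal_density a sg x) \<partial>lborel)"
    by (rule nn_integral_cmult) measurable
  also have "(\<integral>\<^sup>+x. ennreal (normal_density a sg x) \<partial>lborel) = 1"
    using mu by (subst nn_integral_eq_integral) (auto simp: sg_def)
  finally show ?thesis
    by simp
qed

lemma norm_power2_eq_sum_Basis:
  fixes z :: "'a::euclidean_space"
  shows "(norm z)\<^sup>2 = (\<Sum>b\<in>Basis. (z \<bullet> b)\<^sup>2)"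
  unfolding power2_norm_eq_inner by (subst euclidean_inner) (simp add: power2_eq_square)

lemma nn_integral_gaussian:
  fixes mu :: real and c :: "'a::euclidean_space"
  assumes mu: "mu > 0"
  shows "(\<integral>\<^sup>+z. ennreal (exp (- mu * (norm (z - c))\<^sup>2)) \<partial>(lborel::'a measure))
      = ennreal ((pi / mu) powr (real DIM('a) / 2))"
proof -
  have product: "ennreal (exp (- mu * (norm (z - c))\<^sup>2))
      = (\<Prod>b\<in>Basis. ennreal (exp (- mu * (z \<bullet> b - c \<bullet> b)\<^sup>2)))" for z
  proof -
    have "exp (- mu * (norm (z - c))\<^sup>2) = exp (\<Sum>b\<in>Basis. - mu * (z \<bullet> b - c \<bullet> b)\<^sup>2)"
      by (simp add: norm_power2_eq_sum_Basis[of "z - c"] sum_distrib_left inner_diff_left sum_negf)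
    also have "\<dots> = (\<Prod>b\<in>Basis. exp (- mu * (z \<bullet> b - c \<bullet> b)\<^sup>2))"
      by (rule exp_sum) simp
    finally show ?thesis
      by (simp add: prod_ennreal)
  qed
  have "(\<integral>\<^sup>+z. ennreal (exp (- mu * (norm (z - c))\<^sup>2)) \<partial>(lborel::'a measure))
     = (\<integral>\<^sup>+z. (\<Prod>b\<in>Basis. (\<lambda>b x. ennreal (exp (- mu * (x - c \<bullet> b)\<^sup>2))) b (z \<bullet> b)) \<partial>(lborel::'a measure))"
    by (intro nn_integral_cong) (rule product)
  also have "\<dots> = (\<Prod>b\<in>(Basis::'a set). \<integral>\<^sup>+x. ennreal (exp (- mu * (x - c \<bullet> b)\<^sup>2)) \<partial>lborel)"
    by (rule nn_integral_lborel_prod) auto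
  also have "\<dots> = (\<Prod>b\<in>(Basis::'a set). ennreal (sqrt (pi / mu)))"
    using nn_integral_gaussian_real[OF mu] by simp
  also have "\<dots> = ennreal (sqrt (pi / mu) ^ DIM('a))"
    using mu by (simp add: ennreal_power)
  also have "sqrt (pi / mu) ^ DIM('a) = (pi / mu) powr (real DIM('a) / 2)"
    using mu by (simp add: sqrt_def root_powr_inverse powr_realpow[symmetric] powr_powr)
  finally show ?thesis .
qed

lemma completing_square_real:
  fixes a b X Y Z :: real
  assumes "a > 0" and "b > 0"
  shows "X / a + (Y - 2 * Z + X) / b
    = Y / (a + b) + (a + b) / (a * b) * (X - 2 * (a / (a + b)) * Z + (a / (a + b))\<^sup>2 * Y)"
proof -
  have "a + b \<noteq> 0"
    using assms by simp
  then show ?thesis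
    using assms by (simp add: divide_simps) algebra
qed

lemma completing_square:
  fixes z p q :: "'a::real_inner" and a b :: real
  assumes a: "a > 0" and b: "b > 0"
  shows "(norm (z - p))\<^sup>2 / a + (norm (q - z))\<^sup>2 / b
    = (norm (q - p))\<^sup>2 / (a + b) + (a + b) / (a * b) * (norm (z - (p + (a / (a + b)) *\<^sub>R (q - p))))\<^sup>2"
proof -
  define w v where "w = z - p" and "v = q - p"
  have "q - z = v - w" and "z - (p + (a / (a + b)) *\<^sub>R (q - p)) = w - (a / (a + b)) *\<^sub>R v"
    by (simp_all add: w_def v_def)
  then show ?thesis
    using completing_square_real[OF a b, of "w \<bullet> w" "v \<bullet> v" "w \<bullet> v"]
    unfolding power2_norm_eq_inner w_def[symmetric] v_def[symmetric]
    by (simp add: inner_diff_left inner_diff_right inner_commute[of v w] power2_eq_square algebra_simps)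
qed

lemma nn_integral_gaussian_product:
  fixes p q :: "'a::euclidean_space" and lam a b :: real
  assumes l: "lam > 0" and a: "a > 0" and b: "b > 0"
  shows "(\<integral>\<^sup>+z. ennreal (exp (- lam * (norm (z - p))\<^sup>2 / a) * exp (- lam * (norm (q - z))\<^sup>2 / b)) \<partial>(lborel::'a measure))
    = ennreal ((pi * a * b / (lam * (a + b))) powr (real DIM('a) / 2) * exp (- lam * (norm (q - p))\<^sup>2 / (a + b)))"
proof -
  define mu where "mu = lam * (a + b) / (a * b)"
  define c where "c = p + (a / (a + b)) *\<^sub>R (q - p)"
  have mu: "mu > 0"
    using l a b by (simp add: mu_def)
  have split: "exp (- lam * (norm (z - p))\<^sup>2 / a) * exp (- lam * (norm (q - z))\<^sup>2 / b)
     = exp (- lam * (norm (q - p))\<^sup>2 / (a + b)) * exp (- mu * (norm (z - c))\<^sup>2)" for z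
  proof -
    have "- lam * (norm (z - p))\<^sup>2 / a + - lam * (norm (q - z))\<^sup>2 / b
        = - lam * ((norm (z - p))\<^sup>2 / a + (norm (q - z))\<^sup>2 / b)"
      by (simp add: algebra_simps)
    also have "\<dots> = - lam * (norm (q - p))\<^sup>2 / (a + b) + - mu * (norm (z - c))\<^sup>2"
      unfolding completing_square[OF a b, of z p q] c_def mu_def using a b by (simp add: field_simps)
    finally show ?thesis
      by (simp add: exp_add[symmetric])
  qed
  have "(\<integral>\<^sup>+z. ennreal (exp (- lam * (norm (z - p))\<^sup>2 / a) * exp (- lam * (norm (q - z))\<^sup>2 / b)) \<partial>(lborel::'a measure))
     = (\<integral>\<^sup>+z. ennreal (exp (- lam * (norm (q - p))\<^sup>2 / (a + b))) * ennreal (exp (- mu * (norm (z - c))\<^sup>2)) \<partial>(lborel::'a measure))"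
    by (intro nn_integral_cong) (subst split, rule ennreal_mult, auto)
  also have "\<dots> = ennreal (exp (- lam * (norm (q - p))\<^sup>2 / (a + b)))
      * (\<integral>\<^sup>+z. ennreal (exp (- mu * (norm (z - c))\<^sup>2)) \<partial>(lborel::'a measure))"
    by (rule nn_integral_cmult) measurable
  also have "\<dots> = ennreal (exp (- lam * (norm (q - p))\<^sup>2 / (a + b))) * ennreal ((pi / mu) powr (real DIM('a) / 2))"
    by (subst nn_integral_gaussian[OF mu]) simp
  also have "pi / mu = pi * a * b / (lam * (a + b))"
    by (simp add: mu_def)
  finally show ?thesis
    by (simp add: ennreal_mult[symmetric] mult.commute)
qed

lemma xi_convolution:
  fixes p q :: "'a::euclidean_space" and lam a b :: real
  assumes l: "lam > 0" and a: "a > 0" and b: "b > 0"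
  shows "(\<integral>\<^sup>+z. ennreal (xi lam 0 a (z - p) * xi lam 0 b (q - z)) \<partial>(lborel::'a measure))
    = ennreal ((pi / lam) powr (real DIM('a) / 2) * xi lam 0 (a + b) (q - p))"
proof -
  define e where "e = real DIM('a) / 2"
  have "(\<integral>\<^sup>+z. ennreal (xi lam 0 a (z - p) * xi lam 0 b (q - z)) \<partial>(lborel::'a measure))
     = (\<integral>\<^sup>+z. ennreal (a powr - e * b powr - e)
          * ennreal (exp (- lam * (norm (z - p))\<^sup>2 / a) * exp (- lam * (norm (q - z))\<^sup>2 / b)) \<partial>(lborel::'a measure))"
    by (intro nn_integral_cong) (simp add: xi_def e_def ennreal_mult[symmetric] algebra_simps)
  also have "\<dots> = ennreal (a powr - e * b powr - e)
      * (\<integral>\<^sup>+z. ennreal (exp (- lam * (norm (z - p))\<^sup>2 / a) * exp (- lam * (norm (q - z))\<^sup>2 / b)) \<partial>(lborel::'a measure))"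
    by (rule nn_integral_cmult) measurable
  also have "\<dots> = ennreal (a powr - e * b powr - e
      * ((pi * a * b / (lam * (a + b))) powr e * exp (- lam * (norm (q - p))\<^sup>2 / (a + b))))"
    by (subst nn_integral_gaussian_product[OF l a b]) (simp add: e_def ennreal_mult[symmetric])
  also have "a powr - e * b powr - e * ((pi * a * b / (lam * (a + b))) powr e * exp (- lam * (norm (q - p))\<^sup>2 / (a + b)))
     = (pi / lam) powr e * xi lam 0 (a + b) (q - p)"
  proof -
    have "(pi * a * b / (lam * (a + b))) powr e = (pi / lam) powr e * a powr e * b powr e * (a + b) powr - e"
      using l a b by (simp add: powr_mult powr_divide powr_minus divide_simps)
    moreover have "a powr - e * a powr e = 1" "b powr - e * b powr e = 1"
      using a b by (simp_all add: powr_add[symmetric])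
    ultimately show ?thesis
      by (simp add: xi_def e_def) (simp add: algebra_simps)
  qed
  finally show ?thesis
    by (simp add: e_def)
qed

section \<open>Time integrals\<close>

lemma Beta_pos: "a > 0 \<Longrightarrow> b > 0 \<Longrightarrow> Beta a b > (0::real)"
  by (simp add: Beta_def Gamma_real_pos)

lemma nn_integral_Beta_unit_interval:
  fixes a b :: real
  assumes a: "a > -1" and b: "b > -1"
  shows "(\<integral>\<^sup>+u\<in>{0<..<1}. ennreal (u powr a * (1 - u) powr b) \<partial>lborel) = ennreal (Beta (a + 1) (b + 1))"
proof -
  have "((\<lambda>u. u powr a * (1 - u) powr b) has_integral Beta (a + 1) (b + 1)) {0..1}"
    using has_integral_Beta_real[of "a + 1" "b + 1"] a b by simp
  then have "(\<integral>\<^sup>+u\<in>{0..1}. ennreal (u powr a * (1 - u) powr b) \<partial>lborel) = ennreal (Beta (a + 1) (b + 1))"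
    by (rule nn_integral_has_integral_lebesgue'[rotated]) auto
  moreover have "ennreal (u powr a * (1 - u) powr b) * indicator {0..1} u
      = ennreal (u powr a * (1 - u) powr b) * indicator {0<..<1} u" for u :: real
    by (cases "u = 0 \<or> u = 1") (auto simp: indicator_def)
  ultimately show ?thesis
    by simp
qed

lemma nn_integral_Beta_interval:
  fixes a b t s :: real
  assumes a: "a > -1" and b: "b > -1" and ts: "t < s"
  shows "(\<integral>\<^sup>+r\<in>{t<..<s}. ennreal ((r - t) powr a * (s - r) powr b) \<partial>lborel)
     = ennreal ((s - t) powr (a + b + 1) * Beta (a + 1) (b + 1))"
proof -
  define c where "c = s - t"
  have c: "c > 0"
    using ts by (simp add: c_def)
  have rescale: "ennreal ((t + c * u - t) powr a * (s - (t + c * u)) powr b) * indicator {t<..<s} (t + c * u)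
      = ennreal (c powr (a + b)) * (ennreal (u powr a * (1 - u) powr b) * indicator {0<..<1} u)" for u
  proof -
    have "s = t + c"
      by (simp add: c_def)
    then have "t + c * u \<in> {t<..<s} \<longleftrightarrow> u \<in> {0<..<1}"
      using c by (simp add: zero_less_mult_iff mult_less_cancel_left1)
    moreover have "s - (t + c * u) = c * (1 - u)"
      by (simp add: c_def algebra_simps)
    ultimately show ?thesis
      using c by (auto simp: indicator_def powr_mult powr_add ennreal_mult[symmetric])
  qed
  have "(\<integral>\<^sup>+r\<in>{t<..<s}. ennreal ((r - t) powr a * (s - r) powr b) \<partial>lborel)
     = ennreal c * (\<integral>\<^sup>+u. ennreal ((t + c * u - t) powr a * (s - (t + c * u)) powr b) * indicator {t<..<s} (t + c * u) \<partial>lborel)"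
    using c by (subst nn_integral_real_affine[where c = c and t = t]) auto
  also have "\<dots> = ennreal c * (ennreal (c powr (a + b)) * (\<integral>\<^sup>+u\<in>{0<..<1}. ennreal (u powr a * (1 - u) powr b) \<partial>lborel))"
    by (simp only: rescale, subst nn_integral_cmult) measurable
  also have "\<dots> = ennreal ((s - t) powr (a + b + 1) * Beta (a + 1) (b + 1))"
    using c a b Beta_pos[of "a + 1" "b + 1"]
    by (simp add: nn_integral_Beta_unit_interval ennreal_mult[symmetric] powr_add c_def mult.assoc)
  finally show ?thesis .
qed

lemma nn_integral_interval_powr_eq:
  fixes p q t s W :: real
  assumes p: "p > -1" and q: "q > -1" and ts: "t < s" and W: "W \<ge> 0"
    and F: "\<And>r. t < r \<Longrightarrow> r < s \<Longrightarrow> F r = ennreal (W * ((r - t) powr p * (s - r) powr q))"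
  shows "(\<integral>\<^sup>+r\<in>{t<..<s}. F r \<partial>lborel) = ennreal (W * ((s - t) powr (p + q + 1) * Beta (p + 1) (q + 1)))"
proof -
  have "(\<integral>\<^sup>+r\<in>{t<..<s}. F r \<partial>lborel)
      = (\<integral>\<^sup>+r. ennreal W * (ennreal ((r - t) powr p * (s - r) powr q) * indicator {t<..<s} r) \<partial>lborel)"
    by (intro nn_integral_cong) (auto simp: indicator_def F W ennreal_mult)
  also have "\<dots> = ennreal W * (\<integral>\<^sup>+r\<in>{t<..<s}. ennreal ((r - t) powr p * (s - r) powr q) \<partial>lborel)"
    by (rule nn_integral_cmult) measurable
  also have "\<dots> = ennreal (W * ((s - t) powr (p + q + 1) * Beta (p + 1) (q + 1)))"
    using W p q Beta_pos[of "p + 1" "q + 1"]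
    by (simp add: nn_integral_Beta_interval[OF p q ts] ennreal_mult[symmetric])
  finally show ?thesis .
qed

lemma nn_integral_interval_powr_le:
  fixes p q t s W :: real
  assumes p: "p > -1" and q: "q > -1" and ts: "t < s" and W: "W \<ge> 0"
    and F: "\<And>r. t < r \<Longrightarrow> r < s \<Longrightarrow> F r \<le> ennreal (W * ((r - t) powr p * (s - r) powr q))"
  shows "(\<integral>\<^sup>+r\<in>{t<..<s}. F r \<partial>lborel) \<le> ennreal (W * ((s - t) powr (p + q + 1) * Beta (p + 1) (q + 1)))"
proof -
  have "(\<integral>\<^sup>+r\<in>{t<..<s}. F r \<partial>lborel) \<le> (\<integral>\<^sup>+r\<in>{t<..<s}. ennreal (W * ((r - t) powr p * (s - r) powr q)) \<partial>lborel)"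
    by (intro nn_integral_mono) (auto simp: indicator_def F)
  also have "\<dots> = ennreal (W * ((s - t) powr (p + q + 1) * Beta (p + 1) (q + 1)))"
    by (rule nn_integral_interval_powr_eq[OF p q ts W]) simp
  finally show ?thesis .
qed

lemma xi_space_time_convolution:
  fixes x y :: "'a::euclidean_space"
  assumes l: "lam > 0" and g1: "g1 > -2" and g2: "g2 > -2" and ts: "t < s"
  shows "(\<integral>\<^sup>+r\<in>{t<..<s}. (\<integral>\<^sup>+z. ennreal (xi lam g1 (r - t) (z - x) * xi lam g2 (s - r) (y - z)) \<partial>lborel) \<partial>lborel)
    = ennreal ((pi / lam) powr (real DIM('a) / 2) * Beta (g1 / 2 + 1) (g2 / 2 + 1) * xi lam (2 + g1 + g2) (s - t) (y - x))"
proof -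
  define W where "W = (pi / lam) powr (real DIM('a) / 2) * xi lam 0 (s - t) (y - x)"
  have inner: "(\<integral>\<^sup>+z. ennreal (xi lam g1 (r - t) (z - x) * xi lam g2 (s - r) (y - z)) \<partial>lborel)
      = ennreal (W * ((r - t) powr (g1 / 2) * (s - r) powr (g2 / 2)))" if "t < r" "r < s" for r
  proof -
    have a: "r - t > 0" and b: "s - r > 0"
      using that by auto
    have "(\<integral>\<^sup>+z. ennreal (xi lam g1 (r - t) (z - x) * xi lam g2 (s - r) (y - z)) \<partial>lborel)
        = (\<integral>\<^sup>+z. ennreal ((r - t) powr (g1 / 2) * (s - r) powr (g2 / 2))
            * ennreal (xi lam 0 (r - t) (z - x) * xi lam 0 (s - r) (y - z)) \<partial>lborel)"
      by (intro nn_integral_cong)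
        (simp add: xi_time_weight[OF a, of _ g1] xi_time_weight[OF b, of _ g2] ennreal_mult[symmetric] algebra_simps)
    also have "\<dots> = ennreal ((r - t) powr (g1 / 2) * (s - r) powr (g2 / 2))
        * (\<integral>\<^sup>+z. ennreal (xi lam 0 (r - t) (z - x) * xi lam 0 (s - r) (y - z)) \<partial>lborel)"
      by (rule nn_integral_cmult) measurable
    also have "\<dots> = ennreal ((r - t) powr (g1 / 2) * (s - r) powr (g2 / 2)) * ennreal W"
      using xi_convolution[OF l a b, of x y] by (simp add: W_def)
    finally show ?thesis
      by (simp add: W_def ennreal_mult[symmetric] mult.commute)
  qed
  have "(\<integral>\<^sup>+r\<in>{t<..<s}. (\<integral>\<^sup>+z. ennreal (xi lam g1 (r - t) (z - x) * xi lam g2 (s - r) (y - z)) \<partial>lborel) \<partial>lborel)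
      = ennreal (W * ((s - t) powr (g1 / 2 + g2 / 2 + 1) * Beta (g1 / 2 + 1) (g2 / 2 + 1)))"
    by (rule nn_integral_interval_powr_eq) (use inner g1 g2 ts in \<open>auto simp: W_def\<close>)
  also have "W * ((s - t) powr (g1 / 2 + g2 / 2 + 1) * Beta (g1 / 2 + 1) (g2 / 2 + 1))
      = (pi / lam) powr (real DIM('a) / 2) * Beta (g1 / 2 + 1) (g2 / 2 + 1) * xi lam (2 + g1 + g2) (s - t) (y - x)"
  proof -
    have st: "s - t > 0"
      using ts by simp
    have "(s - t) powr (g1 / 2 + g2 / 2 + 1) = (s - t) powr ((2 + g1 + g2) / 2)"
      by (simp add: field_simps)
    then show ?thesis
      by (subst xi_time_weight[OF st, of _ "2 + g1 + g2"]) (simp add: W_def algebra_simps)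
  qed
  finally show ?thesis .
qed

section \<open>Integrability of the polynomial kernel\<close>

lemma powr_le_dyadic_shell_sum:
  fixes c z :: "'a::metric_space" and h P :: real
  assumes h: "h > 0" and P: "P \<ge> 0"
  shows "ennreal ((dist c z + h) powr - P)
    \<le> (\<Sum>k. ennreal ((2 ^ k * h) powr - P) * indicator (ball c (2 ^ Suc k * h)) z)"
proof -
  define f where "f k = ennreal ((2 ^ k * h) powr - P) * indicator (ball c (2 ^ Suc k * h)) z" for k
  define u where "u = dist c z + h"
  obtain n where "u / h < 2 ^ n"
    using real_arch_pow[of 2 "u / h"] by auto
  then have "u < 2 ^ n * h"
    using h by (simp add: field_simps)
  then obtain k where below: "\<forall>i<k. \<not> u < 2 ^ i * h" and above: "u < 2 ^ k * h"
    using ex_least_nat_le[of "\<lambda>i. u < 2 ^ i * h" n] by blast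
  have "k \<noteq> 0"
    using above h by (cases k) (auto simp: u_def)
  then obtain m where m: "k = Suc m"
    by (cases k) auto
  have shell: "2 ^ m * h \<le> u" "z \<in> ball c (2 ^ Suc m * h)"
    using below above m h by (auto simp: u_def not_less)
  have "(dist c z + h) powr - P \<le> (2 ^ m * h) powr - P"
    unfolding u_def[symmetric] by (rule powr_mono2') (use shell h P in auto)
  then have "ennreal ((dist c z + h) powr - P) \<le> f m"
    using shell by (simp add: f_def ennreal_leI)
  also have "\<dots> = (\<Sum>k\<in>{m}. f k)"
    by simp
  also have "\<dots> \<le> (\<Sum>k. f k)"
    by (rule sum_le_suminf) auto
  finally show ?thesis
    by (simp add: f_def)
qed

lemma dyadic_shell_mass:
  fixes h al :: real and k n :: nat
  assumes h: "h > 0"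
  shows "(2 ^ k * h) powr - (real n + al) * (2 ^ Suc k * h) ^ n = 2 ^ n * h powr - al * (2 powr - al) ^ k"
proof -
  have pos: "2 ^ k * h > 0"
    using h by simp
  have "(2 ^ Suc k * h) ^ n = 2 ^ n * (2 ^ k * h) ^ n"
    by (simp add: power_mult_distrib)
  also have "(2 ^ k * h) ^ n = (2 ^ k * h) powr real n"
    using pos by (simp add: powr_realpow)
  finally have "(2 ^ k * h) powr - (real n + al) * (2 ^ Suc k * h) ^ n
      = 2 ^ n * ((2 ^ k * h) powr - (real n + al) * (2 ^ k * h) powr real n)"
    by (simp only: mult_ac)
  also have "(2 ^ k * h) powr - (real n + al) * (2 ^ k * h) powr real n = (2 ^ k * h) powr - al"
    using pos by (simp add: powr_add[symmetric])
  also have "\<dots> = (2 powr - al) ^ k * h powr - al"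
    using h by (simp add: powr_mult powr_realpow[symmetric] powr_powr powr_power mult.commute)
  finally show ?thesis
    by (simp only: mult_ac)
qed

lemma nn_integral_dist_powr_le:
  fixes c :: "'a::euclidean_space" and al h :: real
  assumes al: "al > 0" and h: "h > 0"
  shows "(\<integral>\<^sup>+z. ennreal ((dist c z + h) powr - (real DIM('a) + al)) \<partial>lborel)
    \<le> ennreal (unit_ball_vol (real DIM('a)) * 2 ^ DIM('a) / (1 - 2 powr - al) * h powr - al)"
proof -
  define V where "V = unit_ball_vol (real DIM('a))"
  define q :: real where "q = 2 powr - al"
  have q: "0 < q" "q < 1"
    using powr_less_mono[of "- al" 0 2] al by (simp_all add: q_def)
  have V: "V \<ge> 0"
    by (simp add: V_def)
  define g where "g k z = ennreal ((2 ^ k * h) powr - (real DIM('a) + al)) * indicator (ball c (2 ^ Suc k * h)) z" for k z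
  have "(\<integral>\<^sup>+z. ennreal ((dist c z + h) powr - (real DIM('a) + al)) \<partial>lborel) \<le> (\<integral>\<^sup>+z. (\<Sum>k. g k z) \<partial>lborel)"
    unfolding g_def by (intro nn_integral_mono powr_le_dyadic_shell_sum) (use h al in auto)
  also have "\<dots> = (\<Sum>k. \<integral>\<^sup>+z. g k z \<partial>lborel)"
  proof (rule nn_integral_suminf)
    fix k
    have [measurable]: "ball c (2 ^ Suc k * h) \<in> sets lborel"
      by simp
    show "g k \<in> borel_measurable lborel"
      unfolding g_def by measurable
  qed
  also have "\<dots> = (\<Sum>k. ennreal (V * 2 ^ DIM('a) * h powr - al * q ^ k))"
  proof (intro suminf_cong)
    fix k
    have "(\<integral>\<^sup>+z. g k z \<partial>lborel)
        = ennreal ((2 ^ k * h) powr - (real DIM('a) + al)) * emeasure lborel (ball c (2 ^ Suc k * h))"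
      unfolding g_def by (rule nn_integral_cmult_indicator) simp
    also have "emeasure lborel (ball c (2 ^ Suc k * h)) = ennreal (V * (2 ^ Suc k * h) ^ DIM('a))"
      using h by (simp add: emeasure_ball V_def)
    also have "ennreal ((2 ^ k * h) powr - (real DIM('a) + al)) * ennreal (V * (2 ^ Suc k * h) ^ DIM('a))
        = ennreal (V * ((2 ^ k * h) powr - (real DIM('a) + al) * (2 ^ Suc k * h) ^ DIM('a)))"
      using V h by (simp add: ennreal_mult[symmetric] algebra_simps)
    also have "(2 ^ k * h) powr - (real DIM('a) + al) * (2 ^ Suc k * h) ^ DIM('a) = 2 ^ DIM('a) * h powr - al * q ^ k"
      unfolding q_def by (rule dyadic_shell_mass[OF h])
    finally show "(\<integral>\<^sup>+z. g k z \<partial>lborel) = ennreal (V * 2 ^ DIM('a) * h powr - al * q ^ k)"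
      by (simp only: mult_ac)
  qed
  also have "\<dots> = ennreal (\<Sum>k. V * 2 ^ DIM('a) * h powr - al * q ^ k)"
    by (rule suminf_ennreal2) (use V q in \<open>auto intro!: summable_mult summable_geometric\<close>)
  also have "(\<Sum>k. V * 2 ^ DIM('a) * h powr - al * q ^ k) = V * 2 ^ DIM('a) / (1 - q) * h powr - al"
    using q by (subst suminf_mult) (auto simp: suminf_geometric summable_geometric)
  finally show ?thesis
    by (simp add: V_def q_def)
qed

lemma nn_integral_eta_zero_le:
  fixes al :: real
  assumes al: "al > 0"
  shows "\<exists>K\<ge>0. \<forall>t>0. \<forall>c::'a::euclidean_space.
    (\<integral>\<^sup>+z. ennreal (eta al 0 t (z - c)) \<partial>lborel) \<le> ennreal (K * t powr (- al / 2))"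
proof (intro exI conjI allI impI)
  show "unit_ball_vol (real DIM('a)) * 2 ^ DIM('a) / (1 - 2 powr - al) \<ge> 0"
    using powr_less_mono[of "- al" 0 2] al by simp
  fix t :: real and c :: 'a
  assume t: "t > 0"
  have "eta al 0 t (z - c) = (dist c z + sqrt t) powr - (real DIM('a) + al)" for z
    using t by (simp add: eta_zero_eq dist_norm norm_minus_commute)
  moreover have "sqrt t powr - al = t powr (- al / 2)"
    using t by (simp add: powr_half_sqrt[symmetric] powr_powr)
  ultimately show "(\<integral>\<^sup>+z. ennreal (eta al 0 t (z - c)) \<partial>lborel)
      \<le> ennreal (unit_ball_vol (real DIM('a)) * 2 ^ DIM('a) / (1 - 2 powr - al) * t powr (- al / 2))"
    using nn_integral_dist_powr_le[OF al, of "sqrt t" c] t by simp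
qed

lemma nn_integral_eta_le:
  fixes al :: real
  assumes al: "al > 0"
  shows "\<exists>C. \<forall>g t. t > 0 \<longrightarrow> (\<integral>\<^sup>+x. ennreal (eta al g t (x::'a::euclidean_space)) \<partial>lborel) \<le> ennreal (C * t powr ((g - al) / 2))"
proof -
  obtain K where K: "K \<ge> 0"
    and mass: "\<forall>t>0. \<forall>c::'a. (\<integral>\<^sup>+z. ennreal (eta al 0 t (z - c)) \<partial>lborel) \<le> ennreal (K * t powr (- al / 2))"
    using nn_integral_eta_zero_le[OF al] by blast
  have "(\<integral>\<^sup>+x. ennreal (eta al g t (x::'a)) \<partial>lborel) \<le> ennreal (K * t powr ((g - al) / 2))" if t: "t > 0" for g t
  proof -
    have "(\<integral>\<^sup>+x. ennreal (eta al g t (x::'a)) \<partial>lborel)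
        = (\<integral>\<^sup>+x. ennreal (t powr (g / 2)) * ennreal (eta al 0 t (x - 0 :: 'a)) \<partial>lborel)"
      by (intro nn_integral_cong) (simp add: eta_time_weight[OF t, of _ g] ennreal_mult)
    also have "\<dots> = ennreal (t powr (g / 2)) * (\<integral>\<^sup>+x. ennreal (eta al 0 t (x - 0 :: 'a)) \<partial>lborel)"
      by (rule nn_integral_cmult) measurable
    also have "\<dots> \<le> ennreal (t powr (g / 2)) * ennreal (K * t powr (- al / 2))"
      by (intro mult_left_mono) (use mass[rule_format, OF t, of 0] in simp_all)
    also have "\<dots> = ennreal (K * t powr ((g - al) / 2))"
      using K by (simp add: ennreal_mult[symmetric] powr_add[symmetric] diff_divide_distrib algebra_simps)
    finally show ?thesis .
  qed
  then show ?thesis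
    by blast
qed

section \<open>Products of polynomial kernels\<close>

lemma powr_neg_le_double:
  fixes A E P :: real
  assumes A: "A > 0" and E: "E > 0" and EA: "E \<le> 2 * A" and P: "P \<ge> 0"
  shows "A powr - P \<le> 2 powr P * E powr - P"
proof -
  have "(2 * A) powr - P \<le> E powr - P"
    by (rule powr_mono2') (use A E EA P in auto)
  then have "2 powr P * (2 powr - P * A powr - P) \<le> 2 powr P * E powr - P"
    using A by (simp add: powr_mult)
  then show ?thesis
    by (simp add: mult.assoc[symmetric] powr_add[symmetric])
qed

lemma powr_product_le_sum:
  fixes A B E D al be :: real
  assumes A: "A > 0" and B: "B > 0" and E: "E > 0" and EAB: "E \<le> A + B" and D: "D \<ge> 0"
    and al: "0 < al" and ab: "al \<le> be"
  shows "A powr - (D + al) * B powr - (D + be)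
    \<le> 2 powr (D + al) * (A powr - (D + be) + B powr - (D + be)) * E powr - (D + al)"
proof (cases "B \<le> A")
  case True
  have "A powr - (D + al) \<le> 2 powr (D + al) * E powr - (D + al)"
    by (rule powr_neg_le_double) (use A E EAB True D al in auto)
  then have "A powr - (D + al) * B powr - (D + be) \<le> 2 powr (D + al) * E powr - (D + al) * B powr - (D + be)"
    by (rule mult_right_mono) simp
  also have "\<dots> \<le> 2 powr (D + al) * (A powr - (D + be) + B powr - (D + be)) * E powr - (D + al)"
    by (simp add: algebra_simps)
  finally show ?thesis .
next
  case False
  have "A powr (be - al) \<le> B powr (be - al)"
    by (rule powr_mono2) (use A False ab in auto)
  have "A powr - (D + al) * B powr - (D + be) = A powr - (D + be) * (A powr (be - al) * B powr - (D + be))"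
    using A by (simp add: powr_add[symmetric])
  also have "\<dots> \<le> A powr - (D + be) * (B powr (be - al) * B powr - (D + be))"
    using \<open>A powr (be - al) \<le> B powr (be - al)\<close> by (intro mult_left_mono mult_right_mono) auto
  also have "B powr (be - al) * B powr - (D + be) = B powr - (D + al)"
    by (subst powr_add[symmetric]) (simp add: algebra_simps)
  also have "A powr - (D + be) * B powr - (D + al) \<le> A powr - (D + be) * (2 powr (D + al) * E powr - (D + al))"
    by (intro mult_left_mono powr_neg_le_double) (use B E EAB False D al in auto)
  also have "\<dots> \<le> 2 powr (D + al) * (A powr - (D + be) + B powr - (D + be)) * E powr - (D + al)"
    by (simp add: algebra_simps)
  finally show ?thesis .
qed

lemma eta_product_le:
  fixes x y :: "'a::euclidean_space"
  assumes al: "0 < al" and ab: "al \<le> be" and t: "t > 0" and s: "s > 0"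
  shows "eta al 0 t x * eta be 0 s y
    \<le> 2 powr (real DIM('a) + al) * (eta be 0 t x + eta be 0 s y) * eta al 0 (t + s) (x + y)"
proof -
  have "norm (x + y) + sqrt (t + s) \<le> (norm x + sqrt t) + (norm y + sqrt s)"
    using norm_triangle_ineq[of x y] sqrt_add_le_add_sqrt[of t s] t s by simp
  then show ?thesis
    using powr_product_le_sum[of "norm x + sqrt t" "norm y + sqrt s" "norm (x + y) + sqrt (t + s)"
        "real DIM('a)" al be] t s al ab
    by (simp add: eta_zero_eq add_nonneg_pos)
qed

lemma eta_convolution_le:
  fixes x y :: "'a::euclidean_space"
  assumes al: "0 < al" and ab: "al \<le> be" and K: "K \<ge> 0"
    and mass: "\<And>t c. t > 0 \<Longrightarrow> (\<integral>\<^sup>+z. ennreal (eta be 0 t (z - c :: 'a)) \<partial>lborel) \<le> ennreal (K * t powr (- be / 2))"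
    and a: "a > 0" and b: "b > 0"
  shows "(\<integral>\<^sup>+z. ennreal (eta al 0 a (y - z) * eta be 0 b (z - x)) \<partial>lborel)
    \<le> ennreal (2 powr (real DIM('a) + al) * K * (a powr (- be / 2) + b powr (- be / 2)) * eta al 0 (a + b) (y - x))"
proof -
  define M where "M = 2 powr (real DIM('a) + al) * eta al 0 (a + b) (y - x)"
  have M: "M \<ge> 0"
    by (simp add: M_def)
  have "(\<integral>\<^sup>+z. ennreal (eta al 0 a (y - z) * eta be 0 b (z - x)) \<partial>lborel)
      \<le> (\<integral>\<^sup>+z. ennreal M * (ennreal (eta be 0 a (z - y)) + ennreal (eta be 0 b (z - x))) \<partial>lborel)"
  proof (intro nn_integral_mono)
    fix z
    have "eta al 0 a (y - z) * eta be 0 b (z - x) \<le> M * (eta be 0 a (z - y) + eta be 0 b (z - x))"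
      using eta_product_le[OF al ab a b, of "y - z" "z - x"]
      by (simp add: M_def eta_minus_commute[of be 0 a y z] algebra_simps)
    then show "ennreal (eta al 0 a (y - z) * eta be 0 b (z - x))
        \<le> ennreal M * (ennreal (eta be 0 a (z - y)) + ennreal (eta be 0 b (z - x)))"
      using M by (simp add: ennreal_leI ennreal_mult[symmetric] ennreal_plus[symmetric] del: ennreal_plus)
  qed
  also have "\<dots> = ennreal M * ((\<integral>\<^sup>+z. ennreal (eta be 0 a (z - y)) \<partial>lborel) + (\<integral>\<^sup>+z. ennreal (eta be 0 b (z - x)) \<partial>lborel))"
    by (subst nn_integral_cmult, measurable, subst nn_integral_add, measurable)
  also have "\<dots> \<le> ennreal M * (ennreal (K * a powr (- be / 2)) + ennreal (K * b powr (- be / 2)))"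
    using mass[OF a, of y] mass[OF b, of x] by (intro mult_left_mono add_mono) auto
  also have "\<dots> = ennreal (2 powr (real DIM('a) + al) * K * (a powr (- be / 2) + b powr (- be / 2)) * eta al 0 (a + b) (y - x))"
    using M K by (simp add: M_def ennreal_mult[symmetric] ennreal_plus[symmetric] algebra_simps del: ennreal_plus)
  finally show ?thesis .
qed

lemma powr_weights_le:
  fixes a b g1 g2 be :: real
  assumes a: "a > 0" and b: "b > 0" and be: "be \<ge> 0"
  shows "a powr (g1 / 2) * b powr (g2 / 2) * (a powr (- be / 2) + b powr (- be / 2))
    \<le> 2 * (a + b) powr (be / 2) * (a powr ((g1 - be) / 2) * b powr ((g2 - be) / 2))"
proof -
  define X where "X = a powr ((g1 - be) / 2) * b powr ((g2 - be) / 2)"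
  have a_shift: "a powr (g1 / 2) * a powr (- be / 2) = a powr ((g1 - be) / 2)"
    and b_shift: "b powr (g2 / 2) * b powr (- be / 2) = b powr ((g2 - be) / 2)"
    and a_split: "a powr (g1 / 2) = a powr ((g1 - be) / 2) * a powr (be / 2)"
    and b_split: "b powr (g2 / 2) = b powr ((g2 - be) / 2) * b powr (be / 2)"
    by (simp_all add: powr_add[symmetric] diff_divide_distrib)
  have "a powr (g1 / 2) * b powr (g2 / 2) * a powr (- be / 2) = (a powr (g1 / 2) * a powr (- be / 2)) * b powr (g2 / 2)"
    by (simp only: mult_ac)
  also have "\<dots> = X * b powr (be / 2)"
    by (simp only: a_shift b_split X_def mult_ac)
  finally have first: "a powr (g1 / 2) * b powr (g2 / 2) * a powr (- be / 2) = X * b powr (be / 2)" .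
  have "a powr (g1 / 2) * b powr (g2 / 2) * b powr (- be / 2) = a powr (g1 / 2) * (b powr (g2 / 2) * b powr (- be / 2))"
    by (simp only: mult_ac)
  also have "\<dots> = X * a powr (be / 2)"
    by (simp only: b_shift a_split X_def mult_ac)
  finally have second: "a powr (g1 / 2) * b powr (g2 / 2) * b powr (- be / 2) = X * a powr (be / 2)" .
  have split: "a powr (g1 / 2) * b powr (g2 / 2) * (a powr (- be / 2) + b powr (- be / 2))
      = X * b powr (be / 2) + X * a powr (be / 2)"
    unfolding distrib_left first second ..
  have "b powr (be / 2) \<le> (a + b) powr (be / 2)" and "a powr (be / 2) \<le> (a + b) powr (be / 2)"
    by (rule powr_mono2; use a b be in simp)+
  then have "X * b powr (be / 2) + X * a powr (be / 2) \<le> X * (a + b) powr (be / 2) + X * (a + b) powr (be / 2)"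
    by (intro add_mono mult_left_mono) (simp_all add: X_def)
  then show ?thesis
    unfolding split by (simp add: X_def algebra_simps)
qed

lemma eta_weighted_convolution_le:
  fixes x y :: "'a::euclidean_space"
  assumes al: "0 < al" and ab: "al \<le> be" and K: "K \<ge> 0"
    and mass: "\<And>t c. t > 0 \<Longrightarrow> (\<integral>\<^sup>+z. ennreal (eta be 0 t (z - c :: 'a)) \<partial>lborel) \<le> ennreal (K * t powr (- be / 2))"
    and a: "a > 0" and b: "b > 0"
  shows "(\<integral>\<^sup>+z. ennreal (eta al g1 a (y - z) * eta be g2 b (z - x)) \<partial>lborel)
    \<le> ennreal (2 * 2 powr (real DIM('a) + al) * K * (a + b) powr (be / 2)
        * (a powr ((g1 - be) / 2) * b powr ((g2 - be) / 2)) * eta al 0 (a + b) (y - x))"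
proof -
  define w where "w = a powr (g1 / 2) * b powr (g2 / 2)"
  define N where "N = 2 powr (real DIM('a) + al) * K * eta al 0 (a + b) (y - x)"
  have N: "N \<ge> 0"
    using K by (simp add: N_def)
  have "(\<integral>\<^sup>+z. ennreal (eta al g1 a (y - z) * eta be g2 b (z - x)) \<partial>lborel)
      = (\<integral>\<^sup>+z. ennreal w * ennreal (eta al 0 a (y - z) * eta be 0 b (z - x)) \<partial>lborel)"
    by (intro nn_integral_cong)
      (simp add: w_def eta_time_weight[OF a, of _ g1] eta_time_weight[OF b, of _ g2] ennreal_mult[symmetric] algebra_simps)
  also have "\<dots> = ennreal w * (\<integral>\<^sup>+z. ennreal (eta al 0 a (y - z) * eta be 0 b (z - x)) \<partial>lborel)"
    by (rule nn_integral_cmult) measurable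
  also have "\<dots> \<le> ennreal w * ennreal (N * (a powr (- be / 2) + b powr (- be / 2)))"
    using eta_convolution_le[OF al ab K mass a b, of y x] by (intro mult_left_mono) (simp_all add: N_def algebra_simps)
  also have "\<dots> = ennreal (N * (w * (a powr (- be / 2) + b powr (- be / 2))))"
    using N by (simp add: w_def ennreal_mult[symmetric] algebra_simps)
  also have "\<dots> \<le> ennreal (N * (2 * (a + b) powr (be / 2) * (a powr ((g1 - be) / 2) * b powr ((g2 - be) / 2))))"
    unfolding w_def using N al ab by (intro ennreal_leI mult_left_mono powr_weights_le a b) auto
  finally show ?thesis
    by (simp add: N_def algebra_simps)
qed

lemma eta_space_time_convolution_le:
  fixes al be :: real
  assumes al: "0 < al" and ab: "al \<le> be"
  obtains C where "C \<ge> 0"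
    and "\<And>g1 g2 t s (x::'a::euclidean_space) y. be - 2 < g1 \<Longrightarrow> be - 2 < g2 \<Longrightarrow> t < s \<Longrightarrow>
      (\<integral>\<^sup>+r\<in>{t<..<s}. (\<integral>\<^sup>+z. ennreal (eta al g1 (s - r) (y - z) * eta be g2 (r - t) (z - x)) \<partial>lborel) \<partial>lborel)
        \<le> ennreal (C * Beta ((g1 - be) / 2 + 1) ((g2 - be) / 2 + 1) * eta al (2 + g1 + g2 - be) (s - t) (y - x))"
proof -
  have "be > 0"
    using al ab by simp
  then obtain K where K: "K \<ge> 0"
    and mass: "\<forall>t>0. \<forall>c::'a. (\<integral>\<^sup>+z. ennreal (eta be 0 t (z - c)) \<partial>lborel) \<le> ennreal (K * t powr (- be / 2))"
    using nn_integral_eta_zero_le by blast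
  define C where "C = 2 * 2 powr (real DIM('a) + al) * K"
  have C: "C \<ge> 0"
    using K by (simp add: C_def)
  have "(\<integral>\<^sup>+r\<in>{t<..<s}. (\<integral>\<^sup>+z. ennreal (eta al g1 (s - r) (y - z) * eta be g2 (r - t) (z - x)) \<partial>lborel) \<partial>lborel)
      \<le> ennreal (C * Beta ((g1 - be) / 2 + 1) ((g2 - be) / 2 + 1) * eta al (2 + g1 + g2 - be) (s - t) (y - x))"
    if g1: "be - 2 < g1" and g2: "be - 2 < g2" and ts: "t < s" for g1 g2 t s and x y :: 'a
  proof -
    define W where "W = C * (s - t) powr (be / 2) * eta al 0 (s - t) (y - x)"
    have "(\<integral>\<^sup>+r\<in>{t<..<s}. (\<integral>\<^sup>+z. ennreal (eta al g1 (s - r) (y - z) * eta be g2 (r - t) (z - x)) \<partial>lborel) \<partial>lborel)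
        \<le> ennreal (W * ((s - t) powr ((g2 - be) / 2 + (g1 - be) / 2 + 1) * Beta ((g2 - be) / 2 + 1) ((g1 - be) / 2 + 1)))"
    proof (rule nn_integral_interval_powr_le)
      fix r
      assume "t < r" "r < s"
      then have "(s - r) + (r - t) = s - t" "s - r > 0" "r - t > 0"
        by simp_all
      then show "(\<integral>\<^sup>+z. ennreal (eta al g1 (s - r) (y - z) * eta be g2 (r - t) (z - x)) \<partial>lborel)
          \<le> ennreal (W * ((r - t) powr ((g2 - be) / 2) * (s - r) powr ((g1 - be) / 2)))"
        using eta_weighted_convolution_le[OF al ab K mass[rule_format], of "s - r" "r - t" g1 y g2 x]
        by (simp only: W_def C_def mult_ac)
    qed (use g1 g2 ts C in \<open>simp_all add: W_def field_simps\<close>)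
    also have "W * ((s - t) powr ((g2 - be) / 2 + (g1 - be) / 2 + 1) * Beta ((g2 - be) / 2 + 1) ((g1 - be) / 2 + 1))
        = C * Beta ((g1 - be) / 2 + 1) ((g2 - be) / 2 + 1) * eta al (2 + g1 + g2 - be) (s - t) (y - x)"
    proof -
      have st: "s - t > 0"
        using ts by simp
      have "be / 2 + ((g2 - be) / 2 + (g1 - be) / 2 + 1) = (2 + g1 + g2 - be) / 2"
        by (simp add: field_simps)
      then have "(s - t) powr (be / 2) * (s - t) powr ((g2 - be) / 2 + (g1 - be) / 2 + 1) = (s - t) powr ((2 + g1 + g2 - be) / 2)"
        by (simp only: powr_add[symmetric])
      then show ?thesis
        unfolding W_def eta_time_weight[OF st, of al "2 + g1 + g2 - be"] Beta_commute[of "(g2 - be) / 2 + 1"]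
        by (simp only: mult_ac)
    qed
    finally show ?thesis .
  qed
  with C show ?thesis
    by (rule that)
qed

section \<open>Domination of the Gaussian kernel\<close>

lemma one_plus_powr_le_exp:
  fixes P lam :: real
  assumes P: "P > 0" and l: "lam > 0"
  shows "\<exists>K>0. \<forall>u\<ge>0. (1 + u) powr P \<le> K * exp (lam * u\<^sup>2)"
proof -
  define m where "m = max 2 (P / lam)"
  have m2: "m \<ge> 2" and mP: "m \<ge> P / lam"
    by (auto simp: m_def)
  show ?thesis
  proof (intro exI[of _ "m powr P"] conjI allI impI)
    show "m powr P > 0"
      using m2 by simp
    fix u :: real
    assume u: "u \<ge> 0"
    have "0 \<le> (u - 1)\<^sup>2"
      by simp
    then have "u \<le> 1 + u\<^sup>2"
      using u by (simp add: power2_eq_square algebra_simps)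
    also have "u\<^sup>2 = (P / lam) * (lam * u\<^sup>2 / P)"
      using P l by (simp add: field_simps)
    also have "(P / lam) * (lam * u\<^sup>2 / P) \<le> m * (lam * u\<^sup>2 / P)"
      by (rule mult_right_mono) (use mP P l in auto)
    finally have base: "1 + u \<le> m * (1 + lam * u\<^sup>2 / P)"
      using m2 by (simp add: algebra_simps)
    have "(1 + u) powr P \<le> (m * (1 + lam * u\<^sup>2 / P)) powr P"
      by (rule powr_mono2) (use P u base in auto)
    also have "\<dots> = m powr P * (1 + lam * u\<^sup>2 / P) powr P"
      using m2 P l by (simp add: powr_mult)
    also have "(1 + lam * u\<^sup>2 / P) powr P \<le> exp (lam * u\<^sup>2 / P) powr P"
      by (rule powr_mono2) (use P l in \<open>auto intro: add_nonneg_nonneg\<close>)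
    also have "exp (lam * u\<^sup>2 / P) powr P = exp (lam * u\<^sup>2)"
      using P by (simp add: exp_powr_real)
    finally show "(1 + u) powr P \<le> m powr P * exp (lam * u\<^sup>2)"
      using m2 by (simp add: mult_left_mono)
  qed
qed

lemma xi_zero_scaling:
  fixes x :: "'a::euclidean_space"
  assumes "t > 0"
  shows "xi lam 0 t x = t powr (- real DIM('a) / 2) * exp (- lam * (norm x / sqrt t)\<^sup>2)"
  using assms by (simp add: xi_def power_divide)

lemma eta_self_scaling:
  fixes x :: "'a::euclidean_space"
  assumes t: "t > 0"
  shows "eta al al t x = t powr (- real DIM('a) / 2) * (1 + norm x / sqrt t) powr - (real DIM('a) + al)"
proof -
  define P where "P = real DIM('a) + al"
  have "norm x + sqrt t = sqrt t * (1 + norm x / sqrt t)"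
    using t by (simp add: field_simps)
  then have "eta al al t x = t powr (al / 2) * (sqrt t powr - P * (1 + norm x / sqrt t) powr - P)"
    using t by (simp add: eta_def powr_mult P_def)
  also have "sqrt t powr - P = t powr (- P / 2)"
    using t by (simp add: powr_half_sqrt[symmetric] powr_powr)
  also have "t powr (al / 2) * (t powr (- P / 2) * (1 + norm x / sqrt t) powr - P)
      = t powr (- real DIM('a) / 2) * (1 + norm x / sqrt t) powr - P"
    by (simp add: P_def powr_add[symmetric] mult.assoc[symmetric] diff_divide_distrib add_divide_distrib)
  finally show ?thesis
    by (simp add: P_def)
qed

lemma xi_le_eta:
  fixes al lam :: real
  assumes al: "al > 0" and l: "lam > 0"
  shows "\<exists>C>0. \<forall>t>0. \<forall>x::'a::euclidean_space. xi lam 0 t x \<le> C * eta al al t x"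
proof -
  define P where "P = real DIM('a) + al"
  have "P > 0"
    using al by (simp add: P_def)
  then obtain K where K: "K > 0" and growth: "\<And>u. u \<ge> 0 \<Longrightarrow> (1 + u) powr P \<le> K * exp (lam * u\<^sup>2)"
    using one_plus_powr_le_exp l by blast
  have decay: "exp (- lam * u\<^sup>2) \<le> K * (1 + u) powr - P" if u: "u \<ge> 0" for u
  proof -
    have "1 / exp (lam * u\<^sup>2) \<le> K / (1 + u) powr P"
      using growth[OF u] u K by (simp add: field_simps)
    then show ?thesis
      by (simp add: exp_minus powr_minus_divide inverse_eq_divide)
  qed
  have "xi lam 0 t x \<le> K * eta al al t x" if t: "t > 0" for t and x :: 'a
    using decay[of "norm x / sqrt t"] t
    by (simp add: xi_zero_scaling eta_self_scaling P_def mult_left_mono algebra_simps)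
  with K show ?thesis
    by blast
qed

lemma xi_le_eta_weighted:
  fixes x :: "'a::euclidean_space"
  assumes t: "t > 0" and zero: "xi lam 0 t x \<le> C * eta al al t x"
  shows "xi lam g t x \<le> C * eta al (g + al) t x"
proof -
  have "xi lam g t x = t powr (g / 2) * xi lam 0 t x"
    by (rule xi_time_weight[OF t])
  also have "\<dots> \<le> t powr (g / 2) * (C * eta al al t x)"
    using zero by (rule mult_left_mono) simp
  also have "\<dots> = C * eta al (g + al) t x"
    by (simp add: eta_def add_divide_distrib powr_add algebra_simps)
  finally show ?thesis .
qed

lemma nn_integral_xi_eta_le:
  fixes x y :: "'a::euclidean_space"
  assumes b: "b > 0" and C: "C \<ge> 0" and xi_eta: "\<And>w::'a. xi lam 0 b w \<le> C * eta al al b w"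
  shows "(\<integral>\<^sup>+z. ennreal (xi lam g1 b (z - x) * eta al g2 a (y - z)) \<partial>lborel)
    \<le> ennreal C * (\<integral>\<^sup>+z. ennreal (eta al g2 a (y - z) * eta al (g1 + al) b (z - x)) \<partial>lborel)"
proof -
  have "(\<integral>\<^sup>+z. ennreal (xi lam g1 b (z - x) * eta al g2 a (y - z)) \<partial>lborel)
      \<le> (\<integral>\<^sup>+z. ennreal C * ennreal (eta al g2 a (y - z) * eta al (g1 + al) b (z - x)) \<partial>lborel)"
  proof (intro nn_integral_mono)
    fix z
    have "xi lam g1 b (z - x) * eta al g2 a (y - z) \<le> C * eta al (g1 + al) b (z - x) * eta al g2 a (y - z)"
      using b xi_eta by (intro mult_right_mono xi_le_eta_weighted) auto
    then show "ennreal (xi lam g1 b (z - x) * eta al g2 a (y - z))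
        \<le> ennreal C * ennreal (eta al g2 a (y - z) * eta al (g1 + al) b (z - x))"
      using C by (simp add: ennreal_mult[symmetric] ennreal_leI algebra_simps)
  qed
  also have "\<dots> = ennreal C * (\<integral>\<^sup>+z. ennreal (eta al g2 a (y - z) * eta al (g1 + al) b (z - x)) \<partial>lborel)"
    by (rule nn_integral_cmult) measurable
  finally show ?thesis .
qed

lemma xi_eta_space_time_convolution_le:
  fixes al lam :: real
  assumes al: "0 < al" and l: "lam > 0"
  obtains C where "C \<ge> 0"
    and "\<And>g1 g2 t s (x::'a::euclidean_space) y. -2 < g1 \<Longrightarrow> al - 2 < g2 \<Longrightarrow> t < s \<Longrightarrow>
      (\<integral>\<^sup>+r\<in>{t<..<s}. (\<integral>\<^sup>+z. ennreal (xi lam g1 (r - t) (z - x) * eta al g2 (s - r) (y - z)) \<partial>lborel) \<partial>lborel)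
        \<le> ennreal (C * Beta (g1 / 2 + 1) ((g2 - al) / 2 + 1) * eta al (2 + g1 + g2) (s - t) (y - x))"
proof -
  obtain C1 where C1: "C1 > 0" and xi_eta: "\<forall>t>0. \<forall>x::'a. xi lam 0 t x \<le> C1 * eta al al t x"
    using xi_le_eta[OF al l] by blast
  obtain C4 where C4: "C4 \<ge> 0"
    and bound: "\<And>g1 g2 t s (x::'a) y. al - 2 < g1 \<Longrightarrow> al - 2 < g2 \<Longrightarrow> t < s \<Longrightarrow>
      (\<integral>\<^sup>+r\<in>{t<..<s}. (\<integral>\<^sup>+z. ennreal (eta al g1 (s - r) (y - z) * eta al g2 (r - t) (z - x)) \<partial>lborel) \<partial>lborel)
        \<le> ennreal (C4 * Beta ((g1 - al) / 2 + 1) ((g2 - al) / 2 + 1) * eta al (2 + g1 + g2 - al) (s - t) (y - x))"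
    by (rule eta_space_time_convolution_le[OF al order_refl]) (rule that)
  have "(\<integral>\<^sup>+r\<in>{t<..<s}. (\<integral>\<^sup>+z. ennreal (xi lam g1 (r - t) (z - x) * eta al g2 (s - r) (y - z)) \<partial>lborel) \<partial>lborel)
      \<le> ennreal (C1 * C4 * Beta (g1 / 2 + 1) ((g2 - al) / 2 + 1) * eta al (2 + g1 + g2) (s - t) (y - x))"
    if g1: "-2 < g1" and g2: "al - 2 < g2" and ts: "t < s" for g1 g2 t s and x y :: 'a
  proof -
    define F where "F r = (\<integral>\<^sup>+z. ennreal (eta al g2 (s - r) (y - z) * eta al (g1 + al) (r - t) (z - x)) \<partial>lborel)" for r
    have inner: "(\<integral>\<^sup>+z. ennreal (xi lam g1 (r - t) (z - x) * eta al g2 (s - r) (y - z)) \<partial>lborel) \<le> ennreal C1 * F r"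
      if "t < r" for r
      unfolding F_def using that C1 xi_eta by (intro nn_integral_xi_eta_le) auto
    have "(\<integral>\<^sup>+r\<in>{t<..<s}. (\<integral>\<^sup>+z. ennreal (xi lam g1 (r - t) (z - x) * eta al g2 (s - r) (y - z)) \<partial>lborel) \<partial>lborel)
        \<le> (\<integral>\<^sup>+r. ennreal C1 * (F r * indicator {t<..<s} r) \<partial>lborel)"
      by (intro nn_integral_mono) (auto simp: indicator_def inner)
    also have "\<dots> = ennreal C1 * (\<integral>\<^sup>+r\<in>{t<..<s}. F r \<partial>lborel)"
      unfolding F_def eta_def by (rule nn_integral_cmult) measurable
    also have "\<dots> \<le> ennreal C1 * ennreal (C4 * Beta ((g2 - al) / 2 + 1) ((g1 + al - al) / 2 + 1)
        * eta al (2 + g2 + (g1 + al) - al) (s - t) (y - x))"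
      unfolding F_def using bound[of g2 "g1 + al" t s y x] g1 g2 ts by (intro mult_left_mono) auto
    also have "\<dots> = ennreal (C1 * C4 * Beta (g1 / 2 + 1) ((g2 - al) / 2 + 1) * eta al (2 + g1 + g2) (s - t) (y - x))"
    proof -
      have "g1 / 2 + 1 > 0" "(g2 - al) / 2 + 1 > 0"
        using g1 g2 by (simp_all add: field_simps)
      then have "Beta (g1 / 2 + 1) ((g2 - al) / 2 + 1) \<ge> 0"
        by (simp add: Beta_pos less_imp_le)
      then show ?thesis
        using C1 C4 by (simp add: ennreal_mult[symmetric] Beta_commute algebra_simps)
    qed
    finally show ?thesis .
  qed
  moreover have "C1 * C4 \<ge> 0"
    using C1 C4 by simp
  ultimately show ?thesis
    using that by blast
qed

section \<open>Lower bound for the convolution\<close>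

lemma nn_integral_ge_on_ball:
  fixes f :: "'a::euclidean_space \<Rightarrow> real"
  assumes r: "r \<ge> 0" and m: "m \<ge> 0" and f: "\<And>z. z \<in> ball c r \<Longrightarrow> m \<le> f z"
  shows "ennreal (m * (unit_ball_vol (real DIM('a)) * r ^ DIM('a))) \<le> (\<integral>\<^sup>+z. ennreal (f z) \<partial>lborel)"
proof -
  have "ennreal (m * (unit_ball_vol (real DIM('a)) * r ^ DIM('a))) = ennreal m * emeasure lborel (ball c r)"
    using r m by (simp add: emeasure_ball ennreal_mult)
  also have "\<dots> = (\<integral>\<^sup>+z. ennreal m * indicator (ball c r) z \<partial>lborel)"
    by (rule nn_integral_cmult_indicator[symmetric]) simp
  also have "\<dots> \<le> (\<integral>\<^sup>+z. ennreal (f z) \<partial>lborel)"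
    by (intro nn_integral_mono) (auto simp: indicator_def f ennreal_leI)
  finally show ?thesis .
qed

lemma eta_ge_of_le:
  fixes x :: "'a::euclidean_space"
  assumes t: "t > 0" and al: "al \<ge> 0" and le: "norm x + sqrt t \<le> \<rho>"
  shows "t powr (g / 2) * \<rho> powr - (real DIM('a) + al) \<le> eta al g t x"
  unfolding eta_def by (intro mult_left_mono powr_mono2') (use t al le in \<open>auto intro: add_nonneg_pos\<close>)

lemma two_sqrt_powr_mult_power:
  fixes tau al :: real and n :: nat
  assumes tau: "tau > 0"
  shows "(2 * sqrt tau) powr - (real n + al) * sqrt tau ^ n = 2 powr - (real n + al) * tau powr (- al / 2)"
proof -
  have "(2 * sqrt tau) powr - (real n + al) * sqrt tau ^ n
      = 2 powr - (real n + al) * (sqrt tau powr - (real n + al) * sqrt tau powr real n)"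
    using tau by (simp add: powr_mult powr_realpow)
  also have "sqrt tau powr - (real n + al) * sqrt tau powr real n = sqrt tau powr - al"
    by (subst powr_add[symmetric]) simp
  also have "\<dots> = tau powr (- al / 2)"
    using tau by (simp add: powr_half_sqrt[symmetric] powr_powr)
  finally show ?thesis .
qed

lemma two_powr_mult_powr_le:
  fixes g al T u :: real
  assumes g: "0 \<le> g" "g \<le> al" and T: "T > 0" and u: "u > 0" and Tu: "T \<le> 2 * u"
  shows "2 powr (- al / 2) * T powr (g / 2) \<le> u powr (g / 2)"
proof -
  have "T powr (g / 2) \<le> 2 powr (g / 2) * u powr (g / 2)"
    using powr_mono2[of "g / 2" T "2 * u"] g T Tu u by (simp add: powr_mult)
  moreover have "2 powr (- al / 2) * 2 powr (g / 2) \<le> (1::real)"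
    using powr_mono[of "(g - al) / 2" 0 2] g by (simp add: powr_add[symmetric] diff_divide_distrib)
  ultimately have "2 powr (- al / 2) * T powr (g / 2) \<le> (2 powr (- al / 2) * 2 powr (g / 2)) * u powr (g / 2)"
    by (simp add: mult.assoc mult_left_mono)
  also have "\<dots> \<le> u powr (g / 2)"
    using \<open>2 powr (- al / 2) * 2 powr (g / 2) \<le> 1\<close> by (simp add: mult_left_le_one_le)
  finally show ?thesis .
qed

lemma two_powr_mult_eta_split:
  fixes x :: "'a::euclidean_space"
  assumes t: "t > 0" and s: "s > 0"
  shows "2 powr - (2 * (real DIM('a) + al) + al / 2) * V * eta al g (t + s) x
    = (2 powr (- al / 2) * (t + s) powr (g / 2))
      * (2 powr - (real DIM('a) + al) * 2 powr - (real DIM('a) + al) * (norm x + sqrt (t + s)) powr - (real DIM('a) + al) * V)"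
proof -
  have "- (2 * (real DIM('a) + al) + al / 2) = - al / 2 + (- (real DIM('a) + al) + - (real DIM('a) + al))"
    by simp
  then have "2 powr - (2 * (real DIM('a) + al) + al / 2)
      = 2 powr (- al / 2) * (2 powr - (real DIM('a) + al) * 2 powr - (real DIM('a) + al))"
    by (simp only: powr_add)
  then show ?thesis
    using t s by (simp add: eta_def algebra_simps)
qed

lemma eta_convolution_ge_of_le:
  fixes x :: "'a::euclidean_space"
  assumes al: "al > 0" and g: "0 \<le> g" "g \<le> al" and s: "s > 0" and st: "s \<le> t"
  shows "ennreal (2 powr - (2 * (real DIM('a) + al) + al / 2) * unit_ball_vol (real DIM('a)) * eta al g (t + s) x)
    \<le> (\<integral>\<^sup>+z. ennreal (eta al g t (x - z) * eta al al s z) \<partial>lborel)"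
proof -
  define P where "P = real DIM('a) + al"
  define V where "V = unit_ball_vol (real DIM('a))"
  define R where "R = norm x + sqrt (t + s)"
  have t: "t > 0"
    using s st by simp
  have V: "V > 0"
    by (simp add: V_def)
  have R: "R > 0"
    using t s by (simp add: R_def add_nonneg_pos)
  have sqrt_le: "sqrt s \<le> sqrt (t + s)" "sqrt t \<le> sqrt (t + s)"
    using t s by auto
  define m where "m = (s powr (al / 2) * (2 * sqrt s) powr - P) * (t powr (g / 2) * (2 * R) powr - P)"
  have pw: "m \<le> eta al g t (x - z) * eta al al s z" if "z \<in> ball 0 (sqrt s)" for z
  proof -
    have nz: "norm z < sqrt s"
      using that by simp
    have "s powr (al / 2) * (2 * sqrt s) powr - P \<le> eta al al s z"
      unfolding P_def by (rule eta_ge_of_le) (use s al nz in auto)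
    moreover have "norm (x - z) + sqrt t \<le> 2 * R"
      using norm_triangle_ineq4[of x z] nz sqrt_le norm_ge_zero[of x] unfolding R_def by (smt (verit))
    then have "t powr (g / 2) * (2 * R) powr - P \<le> eta al g t (x - z)"
      unfolding P_def by (rule eta_ge_of_le[OF t less_imp_le[OF al]])
    ultimately show ?thesis
      unfolding m_def by (subst mult.commute) (intro mult_mono, simp_all)
  qed
  have "ennreal (m * (V * sqrt s ^ DIM('a))) \<le> (\<integral>\<^sup>+z. ennreal (eta al g t (x - z) * eta al al s z) \<partial>lborel)"
    unfolding V_def by (rule nn_integral_ge_on_ball[where c = 0]) (use pw s in \<open>auto simp: m_def\<close>)
  moreover have "2 powr - (2 * P + al / 2) * V * eta al g (t + s) x \<le> m * (V * sqrt s ^ DIM('a))"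
  proof -
    have "s powr (al / 2) * (2 * sqrt s) powr - P * sqrt s ^ DIM('a) = 2 powr - P"
      using two_sqrt_powr_mult_power[OF s, of "DIM('a)" al] s by (simp add: P_def mult.assoc powr_add[symmetric])
    then have m: "m * (V * sqrt s ^ DIM('a)) = 2 powr - P * 2 powr - P * t powr (g / 2) * R powr - P * V"
      unfolding m_def using R by (simp add: powr_mult algebra_simps)
    have "2 powr (- al / 2) * (t + s) powr (g / 2) \<le> t powr (g / 2)"
      by (rule two_powr_mult_powr_le) (use g t s st in auto)
    moreover have "2 powr - (2 * P + al / 2) * V * eta al g (t + s) x
        = (2 powr (- al / 2) * (t + s) powr (g / 2)) * (2 powr - P * 2 powr - P * R powr - P * V)"
      unfolding P_def R_def by (rule two_powr_mult_eta_split[OF t s])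
    ultimately show ?thesis
      unfolding m using V R by (simp add: mult_right_mono algebra_simps)
  qed
  ultimately show ?thesis
    unfolding P_def V_def by (meson ennreal_leI order_trans)
qed

lemma eta_convolution_ge_of_less:
  fixes x :: "'a::euclidean_space"
  assumes al: "al > 0" and g: "0 \<le> g" "g \<le> al" and t: "t > 0" and ts: "t < s"
  shows "ennreal (2 powr - (2 * (real DIM('a) + al) + al / 2) * unit_ball_vol (real DIM('a)) * eta al g (t + s) x)
    \<le> (\<integral>\<^sup>+z. ennreal (eta al g t (x - z) * eta al al s z) \<partial>lborel)"
proof -
  define P where "P = real DIM('a) + al"
  define V where "V = unit_ball_vol (real DIM('a))"
  define R where "R = norm x + sqrt (t + s)"
  have s: "s > 0"
    using t ts by simp
  have V: "V > 0"
    by (simp add: V_def)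
  have R: "R > 0"
    using t s by (simp add: R_def add_nonneg_pos)
  have sqrt_le: "sqrt s \<le> sqrt (t + s)" "sqrt t \<le> sqrt (t + s)"
    using t s by auto
  define m where "m = (t powr (g / 2) * (2 * sqrt t) powr - P) * (s powr (al / 2) * (2 * R) powr - P)"
  have pw: "m \<le> eta al g t (x - z) * eta al al s z" if "z \<in> ball x (sqrt t)" for z
  proof -
    have nz: "norm (x - z) < sqrt t"
      using that by (simp add: dist_norm)
    have "t powr (g / 2) * (2 * sqrt t) powr - P \<le> eta al g t (x - z)"
      unfolding P_def by (rule eta_ge_of_le) (use t al nz in auto)
    moreover have "norm z + sqrt s \<le> 2 * R"
      using norm_triangle_ineq2[of z x] norm_minus_commute[of z x] nz sqrt_le norm_ge_zero[of x]
      unfolding R_def by (smt (verit))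
    then have "s powr (al / 2) * (2 * R) powr - P \<le> eta al al s z"
      unfolding P_def by (rule eta_ge_of_le[OF s less_imp_le[OF al]])
    ultimately show ?thesis
      unfolding m_def by (intro mult_mono) simp_all
  qed
  have "ennreal (m * (V * sqrt t ^ DIM('a))) \<le> (\<integral>\<^sup>+z. ennreal (eta al g t (x - z) * eta al al s z) \<partial>lborel)"
    unfolding V_def by (rule nn_integral_ge_on_ball[where c = x]) (use pw t in \<open>auto simp: m_def\<close>)
  moreover have "2 powr - (2 * P + al / 2) * V * eta al g (t + s) x \<le> m * (V * sqrt t ^ DIM('a))"
  proof -
    have "t powr (g / 2) * (2 * sqrt t) powr - P * sqrt t ^ DIM('a) = 2 powr - P * t powr ((g - al) / 2)"
      using two_sqrt_powr_mult_power[OF t, of "DIM('a)" al] t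
      by (simp add: P_def mult.assoc powr_add[symmetric] diff_divide_distrib)
    then have m: "m * (V * sqrt t ^ DIM('a)) = 2 powr - P * 2 powr - P * (t powr ((g - al) / 2) * s powr (al / 2)) * R powr - P * V"
      unfolding m_def using R by (simp add: powr_mult algebra_simps)
    have "2 powr (- al / 2) * (t + s) powr (g / 2) \<le> s powr (g / 2)"
      by (rule two_powr_mult_powr_le) (use g t s ts in auto)
    also have "s powr (g / 2) = s powr ((g - al) / 2) * s powr (al / 2)"
      by (simp add: powr_add[symmetric] diff_divide_distrib)
    also have "\<dots> \<le> t powr ((g - al) / 2) * s powr (al / 2)"
      by (intro mult_right_mono powr_mono2') (use g t ts in auto)
    finally have "2 powr (- al / 2) * (t + s) powr (g / 2) \<le> t powr ((g - al) / 2) * s powr (al / 2)" .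
    moreover have "2 powr - (2 * P + al / 2) * V * eta al g (t + s) x
        = (2 powr (- al / 2) * (t + s) powr (g / 2)) * (2 powr - P * 2 powr - P * R powr - P * V)"
      unfolding P_def R_def by (rule two_powr_mult_eta_split[OF t s])
    ultimately show ?thesis
      unfolding m using V R by (simp add: mult_right_mono algebra_simps)
  qed
  ultimately show ?thesis
    unfolding P_def V_def by (meson ennreal_leI order_trans)
qed

lemma eta_convolution_ge:
  fixes al :: real
  assumes al: "al > 0"
  shows "\<exists>C>0. \<forall>t>0. \<forall>s>0. \<forall>x::'a::euclidean_space. \<forall>g\<in>{0..al}.
    (\<integral>\<^sup>+z. ennreal (eta al g t (x - z) * eta al al s z) \<partial>lborel) \<ge> ennreal (C * eta al g (t + s) x)"
proof (intro exI conjI allI impI ballI)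
  show "2 powr - (2 * (real DIM('a) + al) + al / 2) * unit_ball_vol (real DIM('a)) > 0"
    by simp
  fix t s :: real and x :: 'a and g :: real
  assume "t > 0" "s > 0" "g \<in> {0..al}"
  then show "(\<integral>\<^sup>+z. ennreal (eta al g t (x - z) * eta al al s z) \<partial>lborel)
      \<ge> ennreal (2 powr - (2 * (real DIM('a) + al) + al / 2) * unit_ball_vol (real DIM('a)) * eta al g (t + s) x)"
    using eta_convolution_ge_of_le[OF al, of g s t x] eta_convolution_ge_of_less[OF al, of g t s x]
    by (cases "s \<le> t") auto
qed

theorem lemma2p1:
  assumes d2: "DIM('a::euclidean_space) \<ge> 2"
  shows
  \<comment> \<open>(i)\<close>
  "(\<forall>alpha > 0. (\<forall>lam > 0. \<exists>C1. \<forall>t > 0. \<forall>x::'a. xi lam 0 t x \<le> C1 * eta alpha alpha t x)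
      \<and> (\<exists>C2. \<forall>gam \<ge> 0. \<forall>t > 0.
            (\<integral>\<^sup>+ x. ennreal (eta alpha gam t (x::'a)) \<partial>lborel) \<le> ennreal (C2 * t powr ((gam - alpha) / 2)))
      \<and> (\<exists>C3 > 0. \<forall>t > 0. \<forall>s > 0. \<forall>x::'a. \<forall>gam \<in> {0..alpha}.
            (\<integral>\<^sup>+ z. ennreal (eta alpha gam t (x - z) * eta alpha alpha s z) \<partial>lborel)
              \<ge> ennreal (C3 * eta alpha gam (t + s) x)))
   \<and>
   \<comment> \<open>(ii)\<close>
   (\<forall>alpha beta. 0 < alpha \<and> alpha \<le> beta \<longrightarrow>
      (\<forall>t > 0. \<forall>s > 0. \<forall>x y::'a.
          eta alpha 0 t x * eta beta 0 s y
            \<le> 2 powr (real DIM('a) + alpha) * (eta beta 0 t x + eta beta 0 s y) * eta alpha 0 (t + s) (x + y))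
    \<and> (\<exists>C4. \<forall>gam1 gam2 t s. \<forall>x y::'a. gam1 > beta - 2 \<and> gam2 > beta - 2 \<and> 0 \<le> t \<and> t < s \<longrightarrow>
          (\<integral>\<^sup>+ r \<in> {t<..<s}. (\<integral>\<^sup>+ z. ennreal (eta alpha gam1 (s - r) (y - z) * eta beta gam2 (r - t) (z - x)) \<partial>lborel) \<partial>lborel)
            \<le> ennreal (C4 * Beta ((gam1 - beta) / 2 + 1) ((gam2 - beta) / 2 + 1)
                        * eta alpha (2 + gam1 + gam2 - beta) (s - t) (y - x))))
   \<and>
   \<comment> \<open>(iii)\<close>
   (\<forall>alpha lam. 0 < alpha \<and> alpha < 2 \<and> lam > 0 \<longrightarrow>
      (\<exists>C5. \<forall>gam1 gam2 t s. \<forall>x y::'a. gam1 > -2 \<and> gam2 > alpha - 2 \<and> 0 \<le> t \<and> t < s \<longrightarrow>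
          (\<integral>\<^sup>+ r \<in> {t<..<s}. (\<integral>\<^sup>+ z. ennreal (xi lam gam1 (r - t) (z - x) * eta alpha gam2 (s - r) (y - z)) \<partial>lborel) \<partial>lborel)
            \<le> ennreal (C5 * Beta (gam1 / 2 + 1) ((gam2 - alpha) / 2 + 1)
                        * eta alpha (2 + gam1 + gam2) (s - t) (y - x))))
   \<and>
   \<comment> \<open>(iv)\<close>
   (\<forall>lam > 0.
      (\<forall>t > 0. \<forall>s > 0. \<forall>x::'a.
          (\<integral>\<^sup>+ y. ennreal (xi lam 0 t (x - y) * xi lam 0 s y) \<partial>lborel)
            = ennreal ((pi / lam) powr (real DIM('a) / 2) * xi lam 0 (t + s) x))
    \<and> (\<forall>gam1 gam2 t s. \<forall>x y::'a. gam1 > -2 \<and> gam2 > -2 \<and> 0 \<le> t \<and> t < s \<longrightarrow>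
          (\<integral>\<^sup>+ r \<in> {t<..<s}. (\<integral>\<^sup>+ z. ennreal (xi lam gam1 (r - t) (z - x) * xi lam gam2 (s - r) (y - z)) \<partial>lborel) \<partial>lborel)
            = ennreal ((pi / lam) powr (real DIM('a) / 2) * Beta (gam1 / 2 + 1) (gam2 / 2 + 1)
                        * xi lam (2 + gam1 + gam2) (s - t) (y - x))))"
  apply (intro conjI allI impI; (elim conjE)?)
  subgoal using xi_le_eta by blast
  subgoal using nn_integral_eta_le by blast
  subgoal by (rule eta_convolution_ge)
  subgoal by (rule eta_product_le)
  subgoal premises prems for alpha beta
    by (rule eta_space_time_convolution_le[OF prems]) blast
  subgoal premises prems for alpha lam
    by (rule xi_eta_space_time_convolution_le[OF prems(1,3)]) blast
  subgoal for lam t s x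
    using xi_convolution[of lam s t 0 x] by (simp add: mult.commute add.commute)
  subgoal by (rule xi_space_time_convolution)
  done

end
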